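(* Let $T=T((v_1,k_1),\dots,(v_l,k_l);p)$ and $S=T((v_1,k_1),\dots,(v_l,k_l);q)$ be two trees of diameter 4. Then there exists a non-negative integer $r$ such that $\mathbb{G}(R)$, where $R=T((v_1,k_1),\dots,(v_l,k_l);r)$, is isomorphic to a finite index subgroup of $\mathbb{G}(S)$ and to a finite index subgroup of $\mathbb{G}(T)$. In particular, $\mathbb{G}(S)$ and $\mathbb{G}(T)$ are commensurable.
   Context: For a finite simplicial graph $\Gamma$, $\mathbb{G}(\Gamma)$ is the right-angled Artin group with generators the vertices of $\Gamma$ and relations $[u,v]=1$ for each edge. Two groups are commensurable if they have isomorphic finite index subgroups. Encoding of trees of diameter 4: in a finite tree of diameter 4 the middle vertex of any path of length 4 is the same vertex $c$, the center; leaves adjacent to $c$ are hair vertices; other neighbours of $c$ are pivots. $T((d_1,k_1),\dots,(d_l,k_l);q)$ is the tree of diameter 4 with exactly $q\ge0$ hair vertices and, for each $i$, exactly $k_i$ pivots adjacent to exactly $d_i$ leaves, where $l,d_i,k_i$ are positive integers, $d_1<\dots<d_l$, and either $l\ge2$ or ($l=1$ and $k_1\ge2$). *)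

theory Defs
  imports "HOL-Algebra.Algebra"
begin

text \<open>The RAAG G(V,E) is the group presented by generators V and relations [u,v]=1 for
  edges uv.  Concretely: words over letters (v, sign) with v in V (sign True = v,
  False = v^-1), modulo the equivalence generated by free cancellation / insertion
  of x^e x^-e and by swapping adjacent letters whose vertices are joined by an edge.\<close>

inductive raag_step :: "'v set \<Rightarrow> ('v \<Rightarrow> 'v \<Rightarrow> bool) \<Rightarrow> ('v \<times> bool) list \<Rightarrow> ('v \<times> bool) list \<Rightarrow> bool"
  for V E where
  cancel: "x \<in> V \<Longrightarrow> raag_step V E (u @ [(x, b), (x, \<not> b)] @ w) (u @ w)"
| swap: "E x y \<Longrightarrow> raag_step V E (u @ [(x, b), (y, c)] @ w) (u @ [(y, c), (x, b)] @ w)"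

definition raag_words :: "'v set \<Rightarrow> ('v \<times> bool) list set" where
  "raag_words V = lists (V \<times> UNIV)"

definition raag_rel :: "'v set \<Rightarrow> ('v \<Rightarrow> 'v \<Rightarrow> bool) \<Rightarrow> (('v \<times> bool) list \<times> ('v \<times> bool) list) set" where
  "raag_rel V E =
     ({(x, y). x \<in> raag_words V \<and> y \<in> raag_words V \<and> (raag_step V E x y \<or> raag_step V E y x)})\<^sup>*"

definition raag_mult :: "'v set \<Rightarrow> ('v \<Rightarrow> 'v \<Rightarrow> bool) \<Rightarrow> ('v \<times> bool) list set \<Rightarrow> ('v \<times> bool) list set \<Rightarrow> ('v \<times> bool) list set" where
  "raag_mult V E A B = raag_rel V E `` {z. \<exists>a\<in>A. \<exists>b\<in>B. z = a @ b}"

definition raag :: "'v set \<Rightarrow> ('v \<Rightarrow> 'v \<Rightarrow> bool) \<Rightarrow> ('v \<times> bool) list set monoid" where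
  "raag V E =
     \<lparr> carrier = raag_words V // raag_rel V E,
       Group.monoid.mult = raag_mult V E,
       one = raag_rel V E `` {[]} \<rparr>"

definition finite_index_subgroup :: "'a set \<Rightarrow> ('a, 'b) monoid_scheme \<Rightarrow> bool" where
  "finite_index_subgroup H G \<longleftrightarrow> subgroup H G \<and> finite (rcosets\<^bsub>G\<^esub> H)"

definition iso_to_finite_index_subgroup :: "('a, 'c) monoid_scheme \<Rightarrow> ('b, 'd) monoid_scheme \<Rightarrow> bool" where
  "iso_to_finite_index_subgroup A G \<longleftrightarrow>
     (\<exists>H. finite_index_subgroup H G \<and> A \<cong> G\<lparr>carrier := H\<rparr>)"

definition commensurable :: "('a, 'c) monoid_scheme \<Rightarrow> ('b, 'd) monoid_scheme \<Rightarrow> bool" where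
  "commensurable G H \<longleftrightarrow>
     (\<exists>A B. finite_index_subgroup A G \<and> finite_index_subgroup B H \<and>
            G\<lparr>carrier := A\<rparr> \<cong> H\<lparr>carrier := B\<rparr>)"

text \<open>Concrete model of T((d_1,k_1),...,(d_l,k_l); q), with the parameter list
  ds = [(d_1,k_1),...,(d_l,k_l)] (0-indexed): center C, hair vertices Hair h (h < q),
  pivots Piv i j (i < l, j < k_i), leaves Leaf i j m (m < d_i) attached to Piv i j.\<close>

datatype tvert = Ctr | Hair nat | Piv nat nat | Leaf nat nat nat

definition tree_V :: "(nat \<times> nat) list \<Rightarrow> nat \<Rightarrow> tvert set" where
  "tree_V ds q =
     {Ctr} \<union> {Hair h | h. h < q}
     \<union> {Piv i j | i j. i < length ds \<and> j < snd (ds ! i)}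
     \<union> {Leaf i j m | i j m. i < length ds \<and> j < snd (ds ! i) \<and> m < fst (ds ! i)}"

definition tree_E0 :: "(nat \<times> nat) list \<Rightarrow> nat \<Rightarrow> tvert \<Rightarrow> tvert \<Rightarrow> bool" where
  "tree_E0 ds q x y \<longleftrightarrow>
     (\<exists>h. h < q \<and> x = Ctr \<and> y = Hair h)
   \<or> (\<exists>i j. i < length ds \<and> j < snd (ds ! i) \<and> x = Ctr \<and> y = Piv i j)
   \<or> (\<exists>i j m. i < length ds \<and> j < snd (ds ! i) \<and> m < fst (ds ! i) \<and> x = Piv i j \<and> y = Leaf i j m)"

definition tree_E :: "(nat \<times> nat) list \<Rightarrow> nat \<Rightarrow> tvert \<Rightarrow> tvert \<Rightarrow> bool" where
  "tree_E ds q x y \<longleftrightarrow> tree_E0 ds q x y \<or> tree_E0 ds q y x"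

definition valid_params :: "(nat \<times> nat) list \<Rightarrow> bool" where
  "valid_params ds \<longleftrightarrow>
     ds \<noteq> [] \<and> (\<forall>(d, k) \<in> set ds. 0 < d \<and> 0 < k) \<and>
     sorted_wrt (<) (map fst ds) \<and> (2 \<le> length ds \<or> 2 \<le> snd (hd ds))"

definition tree_raag :: "(nat \<times> nat) list \<Rightarrow> nat \<Rightarrow> (tvert \<times> bool) list set monoid" where
  "tree_raag ds q = raag (tree_V ds q) (tree_E ds q)"

end

theory Submission
  imports Defs
begin

text \<open>Let T have q hairs and P pivots, fix a pivot p and n > 0. The right-angled Artin group
  of the tree R with the same pivots and leaves and r = (P - 1)(n - 1) + q n hairs embeds into
  G(T): the center and the leaves go to themselves, every pivot Q to Q^n, and the hairs of R to
  the conjugates p^s h p^-s of the hairs h of T (s < n) and to the elements p^s Q p^-(s+1)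
  (Q a pivot other than p, s < n - 1). Reidemeister-Schreier rewriting with respect to the
  transversal 1, p, ..., p^(n-1) of the kernel of the map onto the cyclic group of order n
  that sends every pivot to 1 is a left inverse, so the map is injective, and every element of
  G(T) is k p^s with k in the image, so the image has index at most n. With M = P - 1 the
  covers of index M + p of the tree with q hairs and of index M + q of the tree with p hairs
  both have M(M - 1) + M(p + q) + p q hairs.\<close>

definition inv_word :: "('v \<times> bool) list \<Rightarrow> ('v \<times> bool) list" where
  "inv_word w = rev (map (\<lambda>(x, b). (x, \<not> b)) w)"

lemma inv_word_Nil [simp]: "inv_word [] = []"
  by (simp add: inv_word_def)

lemma inv_word_Cons [simp]: "inv_word ((x, b) # w) = inv_word w @ [(x, \<not> b)]"
  by (simp add: inv_word_def)

lemma inv_word_append [simp]: "inv_word (u @ v) = inv_word v @ inv_word u"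
  by (simp add: inv_word_def)

lemma inv_word_inv_word [simp]: "inv_word (inv_word w) = w"
  by (induct w) (auto simp: inv_word_def)

lemma inv_word_replicate [simp]: "inv_word (replicate k (x, b)) = replicate k (x, \<not> b)"
  by (induct k) (auto simp: replicate_append_same)

lemma set_inv_word: "(y, c) \<in> set (inv_word w) \<longleftrightarrow> (y, \<not> c) \<in> set w"
  by (force simp: inv_word_def image_iff)

lemma fst_set_inv_word [simp]: "fst ` set (inv_word w) = fst ` set w"
  by (force simp: inv_word_def image_iff)

lemma raag_words_iff: "w \<in> raag_words V \<longleftrightarrow> fst ` set w \<subseteq> V"
  by (auto simp: raag_words_def)

lemma raag_words_append [simp]:
  "u @ v \<in> raag_words V \<longleftrightarrow> u \<in> raag_words V \<and> v \<in> raag_words V"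
  by (auto simp: raag_words_iff)

lemma raag_words_Cons [simp]: "(x, b) # v \<in> raag_words V \<longleftrightarrow> x \<in> V \<and> v \<in> raag_words V"
  by (auto simp: raag_words_iff)

lemma raag_words_Nil [simp]: "[] \<in> raag_words V"
  by (auto simp: raag_words_iff)

lemma raag_words_inv_word [simp]: "inv_word w \<in> raag_words V \<longleftrightarrow> w \<in> raag_words V"
  by (simp add: raag_words_iff)

lemma raag_words_replicate [simp]: "replicate n (x, b) \<in> raag_words V \<longleftrightarrow> n = 0 \<or> x \<in> V"
  by (induct n) auto

lemma raag_rel_refl [simp]: "(w, w) \<in> raag_rel V E"
  by (simp add: raag_rel_def)

lemma raag_rel_sym: "(x, y) \<in> raag_rel V E \<Longrightarrow> (y, x) \<in> raag_rel V E"
proof -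
  have "sym {(x, y). x \<in> raag_words V \<and> y \<in> raag_words V \<and> (raag_step V E x y \<or> raag_step V E y x)}"
    by (auto simp: sym_def)
  then show "(x, y) \<in> raag_rel V E \<Longrightarrow> (y, x) \<in> raag_rel V E"
    unfolding raag_rel_def by (meson sym_rtrancl symD)
qed

lemma raag_rel_trans:
  "(x, y) \<in> raag_rel V E \<Longrightarrow> (y, z) \<in> raag_rel V E \<Longrightarrow> (x, z) \<in> raag_rel V E"
  unfolding raag_rel_def by (meson rtrancl_trans)

lemma raag_rel_step:
  "raag_step V E x y \<Longrightarrow> x \<in> raag_words V \<Longrightarrow> y \<in> raag_words V \<Longrightarrow> (x, y) \<in> raag_rel V E"
  unfolding raag_rel_def by auto

lemma raag_rel_words: "(x, y) \<in> raag_rel V E \<Longrightarrow> x \<in> raag_words V \<longleftrightarrow> y \<in> raag_words V"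
  unfolding raag_rel_def by (induct rule: rtrancl_induct) auto

lemma raag_step_context: "raag_step V E x y \<Longrightarrow> raag_step V E (p @ x @ s) (p @ y @ s)"
proof (induct rule: raag_step.induct)
  case (cancel x u b w)
  then show ?case using raag_step.cancel[where u="p @ u" and w="w @ s"] by simp
next
  case (swap x y u b c w)
  then show ?case using raag_step.swap[where u="p @ u" and w="w @ s"] by simp
qed

lemma raag_rel_context:
  assumes "(x, y) \<in> raag_rel V E" "p \<in> raag_words V" "s \<in> raag_words V"
  shows "(p @ x @ s, p @ y @ s) \<in> raag_rel V E"
  using assms(1) unfolding raag_rel_def
proof (induct rule: rtrancl_induct)
  case (step y z)
  then have "(p @ y @ s, p @ z @ s) \<in>
      {(x, y). x \<in> raag_words V \<and> y \<in> raag_words V \<and> (raag_step V E x y \<or> raag_step V E y x)}"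
    using raag_step_context[of V E y z p s] raag_step_context[of V E z y p s] assms(2,3) by auto
  with step show ?case by (meson rtrancl.rtrancl_into_rtrancl)
qed simp

lemma raag_rel_append:
  assumes "(a, a') \<in> raag_rel V E" "(b, b') \<in> raag_rel V E" "a \<in> raag_words V" "b \<in> raag_words V"
  shows "(a @ b, a' @ b') \<in> raag_rel V E"
proof -
  have "a' \<in> raag_words V" using assms(1,3) raag_rel_words by blast
  then have "(a @ b, a' @ b) \<in> raag_rel V E" "(a' @ b, a' @ b') \<in> raag_rel V E"
    using raag_rel_context[OF assms(1), of "[]" b] raag_rel_context[OF assms(2), of a' "[]"] assms(4)
    by simp_all
  then show ?thesis using raag_rel_trans by blast
qed

lemma raag_rel_cancel_letter: "x \<in> V \<Longrightarrow> ([(x, b), (x, \<not> b)], []) \<in> raag_rel V E"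
  using raag_step.cancel[where V=V and E=E and u="[]" and w="[]" and b=b] by (intro raag_rel_step) auto

lemma raag_rel_inverse_right: "w \<in> raag_words V \<Longrightarrow> (w @ inv_word w, []) \<in> raag_rel V E"
proof (induct w)
  case (Cons a w)
  obtain x b where a: "a = (x, b)" by (cases a)
  with Cons have x: "x \<in> V" and w: "w \<in> raag_words V" by auto
  have "([(x, b)] @ (w @ inv_word w) @ [(x, \<not> b)], [(x, b)] @ [] @ [(x, \<not> b)]) \<in> raag_rel V E"
    using raag_rel_context[OF Cons(1)[OF w], of "[(x, b)]" "[(x, \<not> b)]"] x by simp
  then show ?case using raag_rel_cancel_letter[OF x, of b E] a by (auto intro: raag_rel_trans)
qed simp

lemma raag_rel_inverse_left: "w \<in> raag_words V \<Longrightarrow> (inv_word w @ w, []) \<in> raag_rel V E"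
  using raag_rel_inverse_right[of "inv_word w" V E] by simp

lemma raag_rel_commute_letter:
  assumes "x \<in> V" "w \<in> raag_words V" "\<forall>y \<in> fst ` set w. E x y"
  shows "((x, b) # w, w @ [(x, b)]) \<in> raag_rel V E"
  using assms(2,3)
proof (induct w)
  case (Cons a w)
  obtain y c where a: "a = (y, c)" by (cases a)
  with Cons have xy: "E x y" and y: "y \<in> V" and w: "w \<in> raag_words V" by auto
  have "((x, b) # (y, c) # w, (y, c) # (x, b) # w) \<in> raag_rel V E"
    using raag_step.swap[where V=V and E=E and u="[]" and w=w and b=b and c=c, OF xy] assms(1) y w
    by (intro raag_rel_step) auto
  moreover have "([(y, c)] @ ((x, b) # w) @ [], [(y, c)] @ (w @ [(x, b)]) @ []) \<in> raag_rel V E"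
    using raag_rel_context[OF Cons(1), of "[(y, c)]" "[]"] Cons.prems a y w by simp
  ultimately show ?case using a by (auto intro: raag_rel_trans)
qed simp

lemma raag_rel_commute:
  assumes "u \<in> raag_words V" "w \<in> raag_words V" "\<forall>x \<in> fst ` set u. \<forall>y \<in> fst ` set w. E x y"
  shows "(u @ w, w @ u) \<in> raag_rel V E"
  using assms
proof (induct u)
  case (Cons a u)
  obtain x b where a: "a = (x, b)" by (cases a)
  with Cons have x: "x \<in> V" and u: "u \<in> raag_words V" by auto
  have "(u @ w, w @ u) \<in> raag_rel V E"
    using Cons u by auto
  then have "((x, b) # u @ w, (x, b) # w @ u) \<in> raag_rel V E"
    using raag_rel_context[of "u @ w" "w @ u" V E "[(x, b)]" "[]"] x by simp
  moreover have "((x, b) # w, w @ [(x, b)]) \<in> raag_rel V E"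
    by (rule raag_rel_commute_letter) (use Cons x a in auto)
  then have "((x, b) # w @ u, w @ (x, b) # u) \<in> raag_rel V E"
    using raag_rel_context[of "(x, b) # w" "w @ [(x, b)]" V E "[]" u] u by simp
  ultimately have "((x, b) # u @ w, w @ (x, b) # u) \<in> raag_rel V E"
    by (rule raag_rel_trans)
  then show ?case
    using a by simp
qed simp

definition raag_class :: "'v set \<Rightarrow> ('v \<Rightarrow> 'v \<Rightarrow> bool) \<Rightarrow> ('v \<times> bool) list \<Rightarrow> ('v \<times> bool) list set" where
  "raag_class V E w = raag_rel V E `` {w}"

lemma raag_class_eq_iff: "raag_class V E w = raag_class V E w' \<longleftrightarrow> (w, w') \<in> raag_rel V E"
proof
  assume eq: "raag_class V E w = raag_class V E w'"
  have "w' \<in> raag_class V E w"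
    unfolding eq by (simp add: raag_class_def)
  then show "(w, w') \<in> raag_rel V E"
    by (simp add: raag_class_def)
next
  assume ww': "(w, w') \<in> raag_rel V E"
  have "(w', w) \<in> raag_rel V E"
    using raag_rel_sym[OF ww'] .
  then show "raag_class V E w = raag_class V E w'"
    unfolding raag_class_def using ww' raag_rel_trans by blast
qed

lemma carrier_raag: "carrier (raag V E) = raag_class V E ` raag_words V"
  by (auto simp: raag_def quotient_def raag_class_def)

lemma one_raag: "\<one>\<^bsub>raag V E\<^esub> = raag_class V E []"
  by (simp add: raag_def raag_class_def)

lemma mult_raag:
  assumes a: "a \<in> raag_words V" and b: "b \<in> raag_words V"
  shows "raag_class V E a \<otimes>\<^bsub>raag V E\<^esub> raag_class V E b = raag_class V E (a @ b)"
proof -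
  have "raag_mult V E (raag_class V E a) (raag_class V E b) \<subseteq> raag_class V E (a @ b)"
  proof
    fix z
    assume "z \<in> raag_mult V E (raag_class V E a) (raag_class V E b)"
    then obtain a' b' where "(a, a') \<in> raag_rel V E" "(b, b') \<in> raag_rel V E"
      "(a' @ b', z) \<in> raag_rel V E"
      unfolding raag_mult_def raag_class_def by auto
    then have "(a @ b, z) \<in> raag_rel V E"
      using raag_rel_append a b raag_rel_trans by blast
    then show "z \<in> raag_class V E (a @ b)"
      by (simp add: raag_class_def)
  qed
  moreover have "raag_class V E (a @ b) \<subseteq> raag_mult V E (raag_class V E a) (raag_class V E b)"
    unfolding raag_mult_def raag_class_def by force
  ultimately show ?thesis
    by (simp add: raag_def)
qed

lemma raag_class_carrier: "w \<in> raag_words V \<Longrightarrow> raag_class V E w \<in> carrier (raag V E)"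
  by (simp add: carrier_raag)

lemma group_raag: "group (raag V E)"
proof (rule groupI)
  fix x
  assume "x \<in> carrier (raag V E)"
  then obtain w where w: "w \<in> raag_words V" "x = raag_class V E w"
    by (auto simp: carrier_raag)
  then have "raag_class V E (inv_word w) \<otimes>\<^bsub>raag V E\<^esub> x = \<one>\<^bsub>raag V E\<^esub>"
    using raag_rel_inverse_left[of w V E] by (simp add: mult_raag one_raag raag_class_eq_iff)
  then show "\<exists>y\<in>carrier (raag V E). y \<otimes>\<^bsub>raag V E\<^esub> x = \<one>\<^bsub>raag V E\<^esub>"
    using w by (intro bexI[of _ "raag_class V E (inv_word w)"]) (auto simp: carrier_raag)
next
  fix x y z
  assume "x \<in> carrier (raag V E)" "y \<in> carrier (raag V E)" "z \<in> carrier (raag V E)"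
  then show "x \<otimes>\<^bsub>raag V E\<^esub> y \<otimes>\<^bsub>raag V E\<^esub> z = x \<otimes>\<^bsub>raag V E\<^esub> (y \<otimes>\<^bsub>raag V E\<^esub> z)"
    by (auto simp: carrier_raag mult_raag)
qed (auto simp: carrier_raag mult_raag one_raag)

lemma (in group) m_inv_cancel_left [simp]:
  "x \<in> carrier G \<Longrightarrow> z \<in> carrier G \<Longrightarrow> x \<otimes> (inv x \<otimes> z) = z"
  by (simp add: m_assoc[symmetric])

lemma (in group) inv_m_cancel_left [simp]:
  "x \<in> carrier G \<Longrightarrow> z \<in> carrier G \<Longrightarrow> inv x \<otimes> (x \<otimes> z) = z"
  by (simp add: m_assoc[symmetric])

lemma (in group) inv_conj_swap:
  assumes "x \<in> carrier G" "a \<in> carrier G" "b \<in> carrier G" "x \<otimes> a = b \<otimes> x"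
  shows "inv x \<otimes> b = a \<otimes> inv x"
  using assms by (metis inv_closed inv_solve_left' inv_solve_right' m_assoc m_closed)

locale raag_presentation =
  fixes V :: "'v set" and E :: "'v \<Rightarrow> 'v \<Rightarrow> bool"
begin

sublocale grp: group "raag V E"
  by (rule group_raag)

abbreviation "cls \<equiv> raag_class V E"

lemma class_carrier [simp]: "w \<in> raag_words V \<Longrightarrow> cls w \<in> carrier (raag V E)"
  by (rule raag_class_carrier)

lemma class_append:
  "a \<in> raag_words V \<Longrightarrow> b \<in> raag_words V \<Longrightarrow> cls (a @ b) = cls a \<otimes>\<^bsub>raag V E\<^esub> cls b"
  by (simp add: mult_raag)

lemma class_Cons:
  \<comment> \<open>without w \<noteq> [] the simplifier would loop on cls [(x, b)]\<close>
  "w \<noteq> [] \<Longrightarrow> x \<in> V \<Longrightarrow> w \<in> raag_words V \<Longrightarrow> cls ((x, b) # w) = cls [(x, b)] \<otimes>\<^bsub>raag V E\<^esub> cls w"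
  using class_append[of "[(x, b)]" w] by simp

lemma class_Nil: "cls [] = \<one>\<^bsub>raag V E\<^esub>"
  by (simp add: one_raag)

lemma class_inv_word: "a \<in> raag_words V \<Longrightarrow> cls (inv_word a) = inv\<^bsub>raag V E\<^esub> cls a"
  using raag_rel_inverse_left[of a V E]
  by (intro grp.inv_equality[symmetric]) (simp_all add: mult_raag one_raag raag_class_eq_iff)

lemma class_commute:
  "u \<in> raag_words V \<Longrightarrow> w \<in> raag_words V \<Longrightarrow> \<forall>x \<in> fst ` set u. \<forall>y \<in> fst ` set w. E x y \<Longrightarrow>
    cls u \<otimes>\<^bsub>raag V E\<^esub> cls w = cls w \<otimes>\<^bsub>raag V E\<^esub> cls u"
  using raag_rel_commute[of u V w E] by (simp add: mult_raag raag_class_eq_iff)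


lemma class_neg_letter: "x \<in> V \<Longrightarrow> cls [(x, False)] = inv\<^bsub>raag V E\<^esub> cls [(x, True)]"
  using class_inv_word[of "[(x, True)]"] by simp

lemma class_replicate: "x \<in> V \<Longrightarrow> cls (replicate k (x, True)) = cls [(x, True)] [^]\<^bsub>raag V E\<^esub> k"
proof (induct k)
  case (Suc k)
  have "replicate (Suc k) (x, True) = replicate k (x, True) @ [(x, True)]"
    by (simp add: replicate_append_same)
  then show ?case
    using Suc by (simp add: class_append)
qed (simp add: class_Nil)

lemma class_replicate_neg:
  "x \<in> V \<Longrightarrow> cls (replicate k (x, False)) = inv\<^bsub>raag V E\<^esub> (cls [(x, True)] [^]\<^bsub>raag V E\<^esub> k)"
  using class_inv_word[of "replicate k (x, True)"] class_replicate[of x k] by simp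

end

section \<open>Maps between right-angled Artin groups given by word transducers\<close>

fun transduce ::
  "('s \<Rightarrow> 'v \<times> bool \<Rightarrow> ('u \<times> bool) list) \<Rightarrow> ('s \<Rightarrow> 'v \<times> bool \<Rightarrow> 's) \<Rightarrow> 's \<Rightarrow>
    ('v \<times> bool) list \<Rightarrow> ('u \<times> bool) list" where
  "transduce out nxt s [] = []"
| "transduce out nxt s (a # w) = out s a @ transduce out nxt (nxt s a) w"

lemma transduce_append [simp]:
  "transduce out nxt s (u @ v) = transduce out nxt s u @ transduce out nxt (foldl nxt s u) v"
  by (induct u arbitrary: s) auto

locale raag_transducer =
  fixes V :: "'v set" and E :: "'v \<Rightarrow> 'v \<Rightarrow> bool" and V' :: "'u set" and E' :: "'u \<Rightarrow> 'u \<Rightarrow> bool"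
    and S :: "'s set" and out :: "'s \<Rightarrow> 'v \<times> bool \<Rightarrow> ('u \<times> bool) list"
    and nxt :: "'s \<Rightarrow> 'v \<times> bool \<Rightarrow> 's"
  assumes next_closed: "s \<in> S \<Longrightarrow> x \<in> V \<Longrightarrow> nxt s (x, b) \<in> S"
    and out_words: "s \<in> S \<Longrightarrow> x \<in> V \<Longrightarrow> out s (x, b) \<in> raag_words V'"
    and next_cancel: "s \<in> S \<Longrightarrow> x \<in> V \<Longrightarrow> nxt (nxt s (x, b)) (x, \<not> b) = s"
    and out_cancel: "s \<in> S \<Longrightarrow> x \<in> V \<Longrightarrow>
      (out s (x, b) @ out (nxt s (x, b)) (x, \<not> b), []) \<in> raag_rel V' E'"
    and next_swap: "s \<in> S \<Longrightarrow> E x y \<Longrightarrow> x \<in> V \<Longrightarrow> y \<in> V \<Longrightarrow>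
      nxt (nxt s (x, b)) (y, c) = nxt (nxt s (y, c)) (x, b)"
    and out_swap: "s \<in> S \<Longrightarrow> E x y \<Longrightarrow> x \<in> V \<Longrightarrow> y \<in> V \<Longrightarrow>
      (out s (x, b) @ out (nxt s (x, b)) (y, c), out s (y, c) @ out (nxt s (y, c)) (x, b))
        \<in> raag_rel V' E'"
begin

lemma foldl_next_closed: "s \<in> S \<Longrightarrow> w \<in> raag_words V \<Longrightarrow> foldl nxt s w \<in> S"
proof (induct w arbitrary: s)
  case (Cons a w)
  then show ?case by (cases a) (auto intro: next_closed)
qed simp

lemma transduce_words: "s \<in> S \<Longrightarrow> w \<in> raag_words V \<Longrightarrow> transduce out nxt s w \<in> raag_words V'"
proof (induct w arbitrary: s)
  case (Cons a w)
  then show ?case by (cases a) (auto intro: next_closed out_words)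
qed simp

lemma transduce_step:
  assumes "raag_step V E w w'" "w \<in> raag_words V" "s \<in> S"
  shows "(transduce out nxt s w, transduce out nxt s w') \<in> raag_rel V' E' \<and>
    foldl nxt s w = foldl nxt s w'"
  using assms(1)
proof cases
  case (cancel x u b v)
  let ?s = "foldl nxt s u"
  have u: "u \<in> raag_words V" and v: "v \<in> raag_words V"
    using assms(2) cancel by auto
  have s: "?s \<in> S"
    using foldl_next_closed[OF assms(3) u] .
  have "(transduce out nxt s u @ (out ?s (x, b) @ out (nxt ?s (x, b)) (x, \<not> b)) @ transduce out nxt ?s v,
         transduce out nxt s u @ [] @ transduce out nxt ?s v) \<in> raag_rel V' E'"
    by (rule raag_rel_context[OF out_cancel[OF s cancel(3)]])
      (simp_all add: transduce_words[OF assms(3) u] transduce_words[OF s v])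
  then show ?thesis
    using cancel next_cancel[OF s cancel(3)] by simp
next
  case (swap x y u b c v)
  let ?s = "foldl nxt s u"
  have u: "u \<in> raag_words V" and v: "v \<in> raag_words V" and x: "x \<in> V" and y: "y \<in> V"
    using assms(2) swap by auto
  have s: "?s \<in> S"
    using foldl_next_closed[OF assms(3) u] .
  have s2: "nxt (nxt ?s (x, b)) (y, c) \<in> S"
    using s x y by (auto intro: next_closed)
  have "(transduce out nxt s u @ (out ?s (x, b) @ out (nxt ?s (x, b)) (y, c)) @
           transduce out nxt (nxt (nxt ?s (x, b)) (y, c)) v,
         transduce out nxt s u @ (out ?s (y, c) @ out (nxt ?s (y, c)) (x, b)) @
           transduce out nxt (nxt (nxt ?s (x, b)) (y, c)) v) \<in> raag_rel V' E'"
    by (rule raag_rel_context[OF out_swap[OF s swap(3) x y]])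
      (simp_all add: transduce_words[OF assms(3) u] transduce_words[OF s2 v])
  then show ?thesis
    using swap next_swap[OF s swap(3) x y] by simp
qed

lemma transduce_rel:
  assumes "(w, w') \<in> raag_rel V E" "w \<in> raag_words V" "s \<in> S"
  shows "(transduce out nxt s w, transduce out nxt s w') \<in> raag_rel V' E' \<and>
    foldl nxt s w = foldl nxt s w'"
proof -
  have "(w, w') \<in> {(x, y). x \<in> raag_words V \<and> y \<in> raag_words V \<and>
      (raag_step V E x y \<or> raag_step V E y x)}\<^sup>*"
    using assms(1) unfolding raag_rel_def .
  then show ?thesis
  proof (induct rule: rtrancl_induct)
    case (step y z)
    then have yz: "y \<in> raag_words V" "z \<in> raag_words V" "raag_step V E y z \<or> raag_step V E z y"
      by auto
    then have "(transduce out nxt s y, transduce out nxt s z) \<in> raag_rel V' E' \<and>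
        foldl nxt s y = foldl nxt s z"
      using transduce_step[of y z s] transduce_step[of z y s] assms(3) raag_rel_sym by metis
    then show ?case
      using step(3) raag_rel_trans by metis
  qed simp
qed

lemma transduce_inv_word:
  assumes out_inverse: "\<And>s x b. s \<in> S \<Longrightarrow> x \<in> V \<Longrightarrow>
      out (nxt s (x, b)) (x, \<not> b) = inv_word (out s (x, b))"
    and "s \<in> S" "w \<in> raag_words V"
  shows "transduce out nxt (foldl nxt s w) (inv_word w) = inv_word (transduce out nxt s w) \<and>
    foldl nxt (foldl nxt s w) (inv_word w) = s"
  using assms(2,3)
proof (induct w arbitrary: s)
  case (Cons a w)
  obtain x b where a: "a = (x, b)" by (cases a)
  with Cons have x: "x \<in> V" and w: "w \<in> raag_words V" by auto
  show ?case
    using Cons(1)[OF next_closed[OF Cons.prems(1) x] w] a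
      out_inverse[OF Cons.prems(1) x, of b] next_cancel[OF Cons.prems(1) x, of b] by simp
qed simp

end

definition subst_word :: "('v \<times> bool \<Rightarrow> ('u \<times> bool) list) \<Rightarrow> ('v \<times> bool) list \<Rightarrow> ('u \<times> bool) list" where
  "subst_word f w = concat (map f w)"

lemma subst_word_simps [simp]:
  "subst_word f [] = []" "subst_word f (a # w) = f a @ subst_word f w"
  "subst_word f (v @ w) = subst_word f v @ subst_word f w"
  by (simp_all add: subst_word_def)

definition subst_hom ::
  "'u set \<Rightarrow> ('u \<Rightarrow> 'u \<Rightarrow> bool) \<Rightarrow> ('v \<times> bool \<Rightarrow> ('u \<times> bool) list) \<Rightarrow>
    ('v \<times> bool) list set \<Rightarrow> ('u \<times> bool) list set" where
  "subst_hom V' E' f A = raag_rel V' E' `` (subst_word f ` A)"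

locale raag_subst =
  fixes V :: "'v set" and E :: "'v \<Rightarrow> 'v \<Rightarrow> bool" and V' :: "'u set" and E' :: "'u \<Rightarrow> 'u \<Rightarrow> bool"
    and f :: "'v \<times> bool \<Rightarrow> ('u \<times> bool) list"
  assumes subst_words: "x \<in> V \<Longrightarrow> f (x, b) \<in> raag_words V'"
    and subst_neg: "f (x, \<not> b) = inv_word (f (x, b))"
    and subst_commute: "E x y \<Longrightarrow> x \<in> V \<Longrightarrow> y \<in> V \<Longrightarrow>
      (f (x, b) @ f (y, c), f (y, c) @ f (x, b)) \<in> raag_rel V' E'"
begin

lemma transduce_eq_subst_word: "transduce (\<lambda>_. f) (\<lambda>_ _. ()) s w = subst_word f w"
  by (induct w) simp_all

sublocale transducer: raag_transducer V E V' E' UNIV "\<lambda>_. f" "\<lambda>_ _. ()"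
  by unfold_locales (simp_all add: subst_words subst_commute subst_neg raag_rel_inverse_right)

lemma subst_word_words: "w \<in> raag_words V \<Longrightarrow> subst_word f w \<in> raag_words V'"
  using transducer.transduce_words[of "()" w] by (simp add: transduce_eq_subst_word)

lemma subst_word_inv_word: "subst_word f (inv_word w) = inv_word (subst_word f w)"
proof (induct w)
  case (Cons a w)
  then show ?case using subst_neg[of "fst a" "snd a"] by (cases a) simp
qed simp

lemma subst_hom_class:
  assumes "w \<in> raag_words V"
  shows "subst_hom V' E' f (raag_class V E w) = raag_class V' E' (subst_word f w)"
proof
  show "subst_hom V' E' f (raag_class V E w) \<subseteq> raag_class V' E' (subst_word f w)"
  proof
    fix z
    assume "z \<in> subst_hom V' E' f (raag_class V E w)"
    then obtain w1 where "(w, w1) \<in> raag_rel V E" "(subst_word f w1, z) \<in> raag_rel V' E'"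
      unfolding subst_hom_def raag_class_def by auto
    then show "z \<in> raag_class V' E' (subst_word f w)"
      using transducer.transduce_rel[of w w1 "()"] assms raag_rel_trans
      unfolding raag_class_def by (auto simp: transduce_eq_subst_word)
  qed
qed (auto simp: subst_hom_def raag_class_def)

lemma subst_hom_hom: "subst_hom V' E' f \<in> hom (raag V E) (raag V' E')"
proof (rule homI)
  fix x
  assume "x \<in> carrier (raag V E)"
  then show "subst_hom V' E' f x \<in> carrier (raag V' E')"
    by (auto simp: carrier_raag subst_hom_class subst_word_words)
next
  fix x y
  assume "x \<in> carrier (raag V E)" "y \<in> carrier (raag V E)"
  then show "subst_hom V' E' f (x \<otimes>\<^bsub>raag V E\<^esub> y) =
      subst_hom V' E' f x \<otimes>\<^bsub>raag V' E'\<^esub> subst_hom V' E' f y"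
    by (auto simp: carrier_raag mult_raag subst_hom_class subst_word_words)
qed

lemma subst_hom_image_subgroup:
  "subgroup (subst_hom V' E' f ` carrier (raag V E)) (raag V' E')"
proof -
  interpret group_hom "raag V E" "raag V' E'" "subst_hom V' E' f"
    by (intro group_hom.intro group_hom_axioms.intro group_raag subst_hom_hom)
  show ?thesis
    by (rule img_is_subgroup)
qed

end

lemma iso_to_finite_index_subgroupI:
  assumes "group A" "group G" "h \<in> hom A G" "inj_on h (carrier A)"
    and "finite (rcosets\<^bsub>G\<^esub> (h ` carrier A))"
  shows "iso_to_finite_index_subgroup A G"
  unfolding iso_to_finite_index_subgroup_def finite_index_subgroup_def
proof (intro exI conjI)
  interpret group_hom A G h
    using assms by (intro group_hom.intro group_hom_axioms.intro)
  show "subgroup (h ` carrier A) G"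
    by (rule img_is_subgroup)
  show "finite (rcosets\<^bsub>G\<^esub> (h ` carrier A))"
    by fact
  have "h \<in> iso A (G\<lparr>carrier := h ` carrier A\<rparr>)"
    using assms(3,4) by (auto simp: iso_def hom_def bij_betw_def)
  then show "A \<cong> G\<lparr>carrier := h ` carrier A\<rparr>"
    by (rule is_isoI)
qed

lemma commensurable_if_common_subgroup:
  assumes "group A" "iso_to_finite_index_subgroup A G" "iso_to_finite_index_subgroup A H"
  shows "commensurable G H"
proof -
  obtain K where K: "finite_index_subgroup K G" "A \<cong> G\<lparr>carrier := K\<rparr>"
    using assms(2) by (auto simp: iso_to_finite_index_subgroup_def)
  obtain L where L: "finite_index_subgroup L H" "A \<cong> H\<lparr>carrier := L\<rparr>"
    using assms(3) by (auto simp: iso_to_finite_index_subgroup_def)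
  have "G\<lparr>carrier := K\<rparr> \<cong> H\<lparr>carrier := L\<rparr>"
    using iso_trans[OF group.iso_sym[OF assms(1) K(2)] L(2)] .
  then show ?thesis
    using K(1) L(1) by (auto simp: commensurable_def)
qed

lemma tree_V_simps [simp]:
  "Ctr \<in> tree_V ds q"
  "Hair h \<in> tree_V ds q \<longleftrightarrow> h < q"
  "Piv i j \<in> tree_V ds q \<longleftrightarrow> i < length ds \<and> j < snd (ds ! i)"
  "Leaf i j m \<in> tree_V ds q \<longleftrightarrow> i < length ds \<and> j < snd (ds ! i) \<and> m < fst (ds ! i)"
  by (auto simp: tree_V_def)

lemma tree_E_simps [simp]:
  "tree_E ds q Ctr (Hair h) \<longleftrightarrow> h < q"
  "tree_E ds q Ctr (Piv i j) \<longleftrightarrow> Piv i j \<in> tree_V ds q"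
  "tree_E ds q (Piv i j) (Leaf i j m) \<longleftrightarrow> Leaf i j m \<in> tree_V ds q"
  "tree_E ds q (Leaf i j m) (Piv i j) \<longleftrightarrow> Leaf i j m \<in> tree_V ds q"
  by (auto simp: tree_E_def tree_E0_def)

lemma tree_E_induct [consumes 1, case_names sym center_hair center_pivot pivot_leaf]:
  assumes "tree_E ds q x y"
    and "\<And>x y. P x y \<Longrightarrow> P y x"
    and "\<And>h. h < q \<Longrightarrow> P Ctr (Hair h)"
    and "\<And>i j. Piv i j \<in> tree_V ds q \<Longrightarrow> P Ctr (Piv i j)"
    and "\<And>i j m. Leaf i j m \<in> tree_V ds q \<Longrightarrow> P (Piv i j) (Leaf i j m)"
  shows "P x y"
proof -
  have "P x y" if "tree_E0 ds q x y" for x y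
    using that assms(3-5) by (auto simp: tree_E0_def)
  then show ?thesis
    using assms(1,2) by (auto simp: tree_E_def)
qed

definition pivots :: "(nat \<times> nat) list \<Rightarrow> tvert set" where
  "pivots ds = {Piv i j | i j. i < length ds \<and> j < snd (ds ! i)}"

definition base_pivot :: tvert where
  "base_pivot = Piv 0 0"

lemma pivots_eq: "pivots ds = (\<Union>i<length ds. Piv i ` {..<snd (ds ! i)})"
  unfolding pivots_def by blast

lemma finite_pivots: "finite (pivots ds)"
  by (simp add: pivots_eq)

lemma valid_params_nth_pos: "valid_params ds \<Longrightarrow> i < length ds \<Longrightarrow> 0 < snd (ds ! i)"
proof -
  assume v: "valid_params ds" and i: "i < length ds"
  have "\<forall>x\<in>set ds. 0 < snd x"
    using v by (auto simp: valid_params_def)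
  then show ?thesis
    using nth_mem[OF i] by blast
qed

lemma base_pivot_in_pivots: "valid_params ds \<Longrightarrow> base_pivot \<in> pivots ds"
  using valid_params_nth_pos[of ds 0] by (simp add: valid_params_def pivots_def base_pivot_def)

lemma card_pivots_ge_2: "valid_params ds \<Longrightarrow> 2 \<le> card (pivots ds)"
proof -
  assume v: "valid_params ds"
  then have ne: "ds \<noteq> []"
    by (simp add: valid_params_def)
  obtain a b where ab: "a \<in> pivots ds" "b \<in> pivots ds" "a \<noteq> b"
  proof (cases "2 \<le> length ds")
    case True
    then have "0 < snd (ds ! 0)" "0 < snd (ds ! 1)"
      using valid_params_nth_pos[OF v, of 0] valid_params_nth_pos[OF v, of 1] ne by auto
    then have "Piv 0 0 \<in> pivots ds" "Piv 1 0 \<in> pivots ds"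
      using True by (auto simp: pivots_def)
    then show ?thesis by (rule that) simp
  next
    case False
    then have "2 \<le> snd (ds ! 0)"
      using v ne by (simp add: valid_params_def hd_conv_nth)
    then have "Piv 0 0 \<in> pivots ds" "Piv 0 1 \<in> pivots ds"
      using ne by (auto simp: pivots_def)
    then show ?thesis by (rule that) simp
  qed
  then have "card {a, b} \<le> card (pivots ds)"
    by (intro card_mono finite_pivots) auto
  then show ?thesis
    using ab by simp
qed

text \<open>Labels of the hairs of the tree R in the index n cover of the tree T with q hairs,
  p being the base pivot: (x, s) stands for the conjugate of a hair x of T by the s-th power
  of p, and (Q, s), for a pivot Q other than p, for the element p^s Q p^-(s+1).\<close>

definition cover_hairs :: "(nat \<times> nat) list \<Rightarrow> nat \<Rightarrow> nat \<Rightarrow> (tvert \<times> nat) set" where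
  "cover_hairs ds q n =
     {(Q, s). Q \<in> pivots ds \<and> Q \<noteq> base_pivot \<and> s < n - 1} \<union> {(Hair h, s) | h s. h < q \<and> s < n}"

lemma cover_hairs_eq:
  "cover_hairs ds q n = ((pivots ds - {base_pivot}) \<times> {..<n - 1}) \<union> (Hair ` {..<q} \<times> {..<n})"
  unfolding cover_hairs_def by blast

lemma finite_cover_hairs: "finite (cover_hairs ds q n)"
  by (simp add: cover_hairs_eq finite_pivots)

lemma card_cover_hairs:
  assumes "valid_params ds"
  shows "card (cover_hairs ds q n) = (card (pivots ds) - 1) * (n - 1) + q * n"
proof -
  have "Hair h \<notin> pivots ds" for h
    by (simp add: pivots_def)
  then have disjoint: "((pivots ds - {base_pivot}) \<times> {..<n - 1}) \<inter> (Hair ` {..<q} \<times> {..<n}) = {}"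
    by (simp add: Times_Int_Times) blast
  have "card (cover_hairs ds q n) =
      card ((pivots ds - {base_pivot}) \<times> {..<n - 1}) + card (Hair ` {..<q} \<times> {..<n})"
    unfolding cover_hairs_eq by (rule card_Un_disjoint[OF _ _ disjoint]) (simp_all add: finite_pivots)
  also have "\<dots> = (card (pivots ds) - 1) * (n - 1) + q * n"
  proof -
    have "card (Hair ` {..<q}) = q"
      by (simp add: card_image inj_on_def)
    then show ?thesis
      using base_pivot_in_pivots[OF assms] finite_pivots[of ds] by (simp add: card_cartesian_product)
  qed
  finally show ?thesis .
qed

section \<open>The cyclic cover of a tree of diameter 4\<close>

text \<open>Sheets s < n stand for the cosets p^s K of the kernel K of the map from G(T) onto the
  cyclic group of order n sending every pivot to 1 and every other vertex to 0, where p is the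
  base pivot. Rewriting reads a word of G(T) letter by letter and keeps track of the sheet.\<close>

locale cyclic_cover =
  fixes ds :: "(nat \<times> nat) list" and q n :: nat and enc :: "tvert \<times> nat \<Rightarrow> nat"
  assumes valid: "valid_params ds" and n_pos: "0 < n"
    and enc_bij: "bij_betw enc (cover_hairs ds q n) {..<card (cover_hairs ds q n)}"
begin

abbreviation "r \<equiv> card (cover_hairs ds q n)"

sublocale R: raag_presentation "tree_V ds r" "tree_E ds r" .
sublocale T: raag_presentation "tree_V ds q" "tree_E ds q" .

abbreviation "GT \<equiv> raag (tree_V ds q) (tree_E ds q)"
abbreviation "GR \<equiv> raag (tree_V ds r) (tree_E ds r)"
abbreviation "clT \<equiv> raag_class (tree_V ds q) (tree_E ds q)"
abbreviation "clR \<equiv> raag_class (tree_V ds r) (tree_E ds r)"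
abbreviation "WT \<equiv> raag_words (tree_V ds q)"
abbreviation "WR \<equiv> raag_words (tree_V ds r)"

definition hair_label :: "nat \<Rightarrow> tvert \<times> nat" where
  "hair_label = inv_into (cover_hairs ds q n) enc"

lemma base_pivot_vertex [simp]: "base_pivot \<in> tree_V ds q'"
  using valid by (cases ds) (auto simp: base_pivot_def valid_params_def)

lemma base_pivot_center_edges [simp]: "tree_E ds q' Ctr base_pivot" "tree_E ds q' base_pivot Ctr"
  using base_pivot_vertex[of q'] by (auto simp: base_pivot_def tree_E_def tree_E0_def)


lemma enc_less: "x \<in> cover_hairs ds q n \<Longrightarrow> enc x < r"
  using enc_bij by (auto simp: bij_betw_def)

lemma hair_label_enc [simp]: "x \<in> cover_hairs ds q n \<Longrightarrow> hair_label (enc x) = x"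
  using enc_bij by (simp add: hair_label_def bij_betw_def)

lemma hair_label_in: "k < r \<Longrightarrow> hair_label k \<in> cover_hairs ds q n"
  using enc_bij unfolding hair_label_def bij_betw_def by (metis inv_into_into lessThan_iff)

lemma enc_hair_label: "k < r \<Longrightarrow> enc (hair_label k) = k"
  using enc_bij unfolding hair_label_def bij_betw_def by (simp add: f_inv_into_f)

lemma cover_hairs_hairI: "h < q \<Longrightarrow> s < n \<Longrightarrow> (Hair h, s) \<in> cover_hairs ds q n"
  by (simp add: cover_hairs_def)

lemma cover_hairs_pivotI:
  "Q \<in> pivots ds \<Longrightarrow> Q \<noteq> base_pivot \<Longrightarrow> s < n - 1 \<Longrightarrow> (Q, s) \<in> cover_hairs ds q n"
  by (simp add: cover_hairs_def)

lemma hair_label_cases: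
  assumes "k < r"
  obtains (hair) h s where "hair_label k = (Hair h, s)" "h < q" "s < n"
  | (pivot) i j s where "hair_label k = (Piv i j, s)" "Piv i j \<in> tree_V ds q"
      "Piv i j \<noteq> base_pivot" "Suc s < n"
  using hair_label_in[OF assms] by (auto simp: cover_hairs_def pivots_def)

definition top_sheet :: nat where
  "top_sheet = n - 1"

definition sheet_succ :: "nat \<Rightarrow> nat" where
  "sheet_succ s = Suc s mod n"

definition sheet_pred :: "nat \<Rightarrow> nat" where
  "sheet_pred s = (s + n - 1) mod n"

definition sheet_step :: "nat \<Rightarrow> tvert \<times> bool \<Rightarrow> nat" where
  "sheet_step s a = (case a of (Piv i j, b) \<Rightarrow> if b then sheet_succ s else sheet_pred s | _ \<Rightarrow> s)"

lemma sheet_step_simps [simp]: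
  "sheet_step s (Ctr, b) = s" "sheet_step s (Hair h, b) = s" "sheet_step s (Leaf i j m, b) = s"
  "sheet_step s (Piv i j, True) = sheet_succ s" "sheet_step s (Piv i j, False) = sheet_pred s"
  by (simp_all add: sheet_step_def)

lemma n_eq: "n = Suc top_sheet"
  using n_pos by (simp add: top_sheet_def)

lemma top_sheet_less [simp]: "top_sheet < n"
  using n_pos by (simp add: top_sheet_def)

lemma sheet_succ_eq: "s < n \<Longrightarrow> sheet_succ s = (if s = top_sheet then 0 else Suc s)"
  by (auto simp: sheet_succ_def top_sheet_def mod_if)

lemma sheet_pred_eq: "s < n \<Longrightarrow> sheet_pred s = (if s = 0 then top_sheet else s - 1)"
proof (cases "s = 0")
  case False
  assume s: "s < n"
  have "(s + n - 1) mod n = ((s - 1) + n) mod n"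
    using False by (metis Nat.add_diff_assoc2 One_nat_def Suc_leI neq0_conv)
  also have "\<dots> = s - 1"
    using s by simp
  finally show ?thesis
    using False by (simp add: sheet_pred_def)
qed (use n_pos in \<open>simp add: sheet_pred_def top_sheet_def\<close>)

lemma sheet_succ_less [simp]: "sheet_succ s < n"
  using n_pos by (simp add: sheet_succ_def)

lemma sheet_pred_less [simp]: "sheet_pred s < n"
  using n_pos by (simp add: sheet_pred_def)

lemma sheet_succ_pred [simp]: "s < n \<Longrightarrow> sheet_succ (sheet_pred s) = s"
  using sheet_pred_less[of s] by (auto simp: sheet_succ_eq sheet_pred_eq top_sheet_def)

lemma sheet_pred_succ [simp]: "s < n \<Longrightarrow> sheet_pred (sheet_succ s) = s"
  using sheet_succ_less[of s] by (auto simp: sheet_succ_eq sheet_pred_eq top_sheet_def)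

lemma sheet_step_less: "s < n \<Longrightarrow> sheet_step s a < n"
  by (cases a; cases "fst a"; auto simp: sheet_step_def)

lemma sheet_step_inverse: "s < n \<Longrightarrow> sheet_step (sheet_step s (x, b)) (x, \<not> b) = s"
  by (cases x; cases b) auto

text \<open>lift_pivot Q s is the word of G(R) for p^s Q p^-(s+1) when s < n - 1, and for
  p^(n-1) Q = (Q^(n-1) p^-(n-1))^-1 Q^n at the top sheet, where the pivot Q of R stands for
  Q^n; lift_pivot_pow Q s is the word for Q^s p^-s.\<close>

definition lift_pivot_pow :: "tvert \<Rightarrow> nat \<Rightarrow> (tvert \<times> bool) list" where
  "lift_pivot_pow Q s = (if Q = base_pivot then [] else map (\<lambda>t. (Hair (enc (Q, t)), True)) [0..<s])"

definition lift_pivot :: "tvert \<Rightarrow> nat \<Rightarrow> (tvert \<times> bool) list" where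
  "lift_pivot Q s =
     (if s < top_sheet then (if Q = base_pivot then [] else [(Hair (enc (Q, s)), True)])
      else inv_word (lift_pivot_pow Q top_sheet) @ [(Q, True)])"

definition lift_letter :: "nat \<Rightarrow> tvert \<times> bool \<Rightarrow> (tvert \<times> bool) list" where
  "lift_letter s a = (case a of
       (Ctr, b) \<Rightarrow> [(Ctr, b)]
     | (Hair h, b) \<Rightarrow> [(Hair (enc (Hair h, s)), b)]
     | (Leaf i j m, b) \<Rightarrow>
         inv_word (lift_pivot_pow (Piv i j) s) @ [(Leaf i j m, b)] @ lift_pivot_pow (Piv i j) s
     | (Piv i j, b) \<Rightarrow>
         if b then lift_pivot (Piv i j) s else inv_word (lift_pivot (Piv i j) (sheet_pred s)))"

lemma lift_letter_simps [simp]: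
  "lift_letter s (Ctr, b) = [(Ctr, b)]"
  "lift_letter s (Hair h, b) = [(Hair (enc (Hair h, s)), b)]"
  "lift_letter s (Leaf i j m, b) =
     inv_word (lift_pivot_pow (Piv i j) s) @ [(Leaf i j m, b)] @ lift_pivot_pow (Piv i j) s"
  "lift_letter s (Piv i j, True) = lift_pivot (Piv i j) s"
  "lift_letter s (Piv i j, False) = inv_word (lift_pivot (Piv i j) (sheet_pred s))"
  by (simp_all add: lift_letter_def)

abbreviation "lift_word \<equiv> transduce lift_letter sheet_step"

lemma lift_pivot_pow_0 [simp]: "lift_pivot_pow Q 0 = []"
  by (simp add: lift_pivot_pow_def)

lemma lift_pivot_pow_Suc:
  "s < top_sheet \<Longrightarrow> lift_pivot_pow Q (Suc s) = lift_pivot_pow Q s @ lift_pivot Q s"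
  by (simp add: lift_pivot_pow_def lift_pivot_def)

lemma lift_pivot_top: "lift_pivot Q top_sheet = inv_word (lift_pivot_pow Q top_sheet) @ [(Q, True)]"
  by (simp add: lift_pivot_def)

lemma lift_pivot_pow_words: "Q \<in> pivots ds \<Longrightarrow> s \<le> top_sheet \<Longrightarrow> lift_pivot_pow Q s \<in> WR"
  by (auto simp: lift_pivot_pow_def raag_words_iff top_sheet_def intro!: enc_less cover_hairs_pivotI)

lemma lift_pivot_words: "Q \<in> pivots ds \<Longrightarrow> lift_pivot Q s \<in> WR"
  using lift_pivot_pow_words[of Q top_sheet]
  by (auto simp: lift_pivot_def raag_words_iff pivots_def top_sheet_def
      intro!: enc_less cover_hairs_pivotI)

lemma lift_letter_words: "s < n \<Longrightarrow> x \<in> tree_V ds q \<Longrightarrow> lift_letter s (x, b) \<in> WR"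
  by (cases x; cases b)
    (auto simp: pivots_def top_sheet_def intro!: lift_pivot_words lift_pivot_pow_words enc_less
      cover_hairs_hairI)

lemma lift_letter_inverse:
  "s < n \<Longrightarrow> lift_letter (sheet_step s (x, b)) (x, \<not> b) = inv_word (lift_letter s (x, b))"
  by (cases x; cases b) simp_all

lemma lift_pivot_pow_adjacent_center:
  "Q \<in> pivots ds \<Longrightarrow> s \<le> top_sheet \<Longrightarrow> \<forall>z \<in> fst ` set (lift_pivot_pow Q s). tree_E ds r Ctr z"
  by (auto simp: lift_pivot_pow_def top_sheet_def intro!: enc_less cover_hairs_pivotI)

lemma lift_pivot_adjacent_center:
  "Q \<in> pivots ds \<Longrightarrow> \<forall>z \<in> fst ` set (lift_pivot Q s). tree_E ds r Ctr z"
  using lift_pivot_pow_adjacent_center[of Q top_sheet]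
  by (auto simp: lift_pivot_def pivots_def lift_pivot_pow_def set_inv_word top_sheet_def
      intro!: enc_less cover_hairs_pivotI)

text \<open>Only the lifts of leaves involve letters not adjacent to the center of R.\<close>

lemma lift_center_commute:
  assumes "s < n" "z \<in> tree_V ds q" "z \<noteq> Ctr" "\<And>i j m. z \<noteq> Leaf i j m"
  shows "([(Ctr, b)] @ lift_letter s (z, c), lift_letter s (z, c) @ [(Ctr, b)]) \<in> raag_rel (tree_V ds r) (tree_E ds r)"
proof (rule raag_rel_commute)
  have "\<forall>y \<in> fst ` set (lift_letter s (z, c)). tree_E ds r Ctr y"
  proof (cases z)
    case (Hair h)
    then show ?thesis
      using assms by (auto intro!: enc_less cover_hairs_hairI)
  next
    case (Piv i j)
    then have "Piv i j \<in> pivots ds"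
      using assms by (simp add: pivots_def)
    then show ?thesis
      using Piv lift_pivot_adjacent_center by (cases c) auto
  qed (use assms in auto)
  then show "\<forall>x \<in> fst ` set [(Ctr, b)]. \<forall>y \<in> fst ` set (lift_letter s (z, c)). tree_E ds r x y"
    by simp
qed (use lift_letter_words[OF assms(1,2)] in auto)

lemma lift_pivot_leaf_commute:
  assumes l: "Leaf i j m \<in> tree_V ds q" and s: "s < n"
  shows "clR (lift_pivot (Piv i j) s @ lift_letter (sheet_succ s) (Leaf i j m, c)) =
    clR (lift_letter s (Leaf i j m, c) @ lift_pivot (Piv i j) s)"
proof -
  let ?Q = "Piv i j"
  have Q: "?Q \<in> pivots ds"
    using l by (simp add: pivots_def)
  have lR: "Leaf i j m \<in> tree_V ds r" "?Q \<in> tree_V ds r"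
    using l by auto
  have X: "lift_pivot ?Q s \<in> WR"
    using lift_pivot_words[OF Q] .
  show ?thesis
  proof (cases "s < top_sheet")
    case True
    then have succ: "sheet_succ s = Suc s"
      using s by (simp add: sheet_succ_eq)
    have Y: "lift_pivot_pow ?Q s \<in> WR"
      using lift_pivot_pow_words[OF Q] True by simp
    show ?thesis
      using True Y X lR
      by (simp add: succ lift_pivot_pow_Suc R.class_append R.class_inv_word R.grp.inv_mult_group
          R.grp.m_assoc)
  next
    case False
    then have s_top: "s = top_sheet"
      using s by (simp add: top_sheet_def)
    have succ: "sheet_succ top_sheet = 0"
      by (simp add: sheet_succ_eq)
    have Y: "lift_pivot_pow ?Q top_sheet \<in> WR"
      using lift_pivot_pow_words[OF Q] by simp
    have comm: "clR [(?Q, True)] \<otimes>\<^bsub>GR\<^esub> clR [(Leaf i j m, c)] =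
        clR [(Leaf i j m, c)] \<otimes>\<^bsub>GR\<^esub> clR [(?Q, True)]"
      by (rule R.class_commute) (use lR in auto)
    show ?thesis
      using Y lR
      by (simp add: succ s_top lift_pivot_top R.class_append R.class_Cons R.class_inv_word
          R.grp.inv_mult_group R.grp.m_assoc comm)
  qed
qed

lemma lift_pivot_leaf_rel:
  assumes l: "Leaf i j m \<in> tree_V ds q" and s: "s < n"
  shows "(lift_letter s (Piv i j, b) @ lift_letter (sheet_step s (Piv i j, b)) (Leaf i j m, c),
      lift_letter s (Leaf i j m, c) @ lift_letter (sheet_step s (Leaf i j m, c)) (Piv i j, b))
    \<in> raag_rel (tree_V ds r) (tree_E ds r)"
proof (cases b)
  case True
  then show ?thesis
    using lift_pivot_leaf_commute[OF l s, of c] by (simp add: raag_class_eq_iff)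
next
  case False
  let ?s = "sheet_pred s"
  let ?X = "lift_pivot (Piv i j) ?s"
  have L: "lift_letter s (Leaf i j m, c) \<in> WR" "lift_letter ?s (Leaf i j m, c) \<in> WR"
    using lift_letter_words[OF s l] lift_letter_words[OF _ l] by simp_all
  have X: "?X \<in> WR"
    using l by (intro lift_pivot_words) (simp add: pivots_def)
  have "clR (?X @ lift_letter s (Leaf i j m, c)) = clR (lift_letter ?s (Leaf i j m, c) @ ?X)"
    using lift_pivot_leaf_commute[OF l sheet_pred_less, of s c] sheet_succ_pred[OF s] by (simp only:)
  then have "clR ?X \<otimes>\<^bsub>GR\<^esub> clR (lift_letter s (Leaf i j m, c)) =
      clR (lift_letter ?s (Leaf i j m, c)) \<otimes>\<^bsub>GR\<^esub> clR ?X"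
    by (simp only: R.class_append[OF X L(1)] R.class_append[OF L(2) X])
  then have "inv\<^bsub>GR\<^esub> clR ?X \<otimes>\<^bsub>GR\<^esub> clR (lift_letter ?s (Leaf i j m, c)) =
      clR (lift_letter s (Leaf i j m, c)) \<otimes>\<^bsub>GR\<^esub> inv\<^bsub>GR\<^esub> clR ?X"
    using L X by (intro R.grp.inv_conj_swap) simp_all
  then have "clR (inv_word ?X @ lift_letter ?s (Leaf i j m, c)) =
      clR (lift_letter s (Leaf i j m, c) @ inv_word ?X)"
    using L X by (simp only: R.class_append raag_words_inv_word R.class_inv_word simp_thms)
  then show ?thesis
    using False by (simp only: raag_class_eq_iff lift_letter_simps sheet_step_simps)
qed

sublocale lift: raag_transducer "tree_V ds q" "tree_E ds q" "tree_V ds r" "tree_E ds r" "{..<n}"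
  lift_letter sheet_step
proof unfold_locales
  fix s x b
  assume "s \<in> {..<n}" "x \<in> tree_V ds q"
  then show "sheet_step s (x, b) \<in> {..<n}" "lift_letter s (x, b) \<in> WR"
    "sheet_step (sheet_step s (x, b)) (x, \<not> b) = s"
    "(lift_letter s (x, b) @ lift_letter (sheet_step s (x, b)) (x, \<not> b), []) \<in> raag_rel (tree_V ds r) (tree_E ds r)"
    using sheet_step_less lift_letter_words sheet_step_inverse lift_letter_inverse[of s x b]
      raag_rel_inverse_right[OF lift_letter_words] by simp_all
next
  fix s x y b c
  assume "tree_E ds q x y"
  then show "sheet_step (sheet_step s (x, b)) (y, c) = sheet_step (sheet_step s (y, c)) (x, b)"
    by (induct arbitrary: b c rule: tree_E_induct) auto
next
  fix s x y b c
  assume s: "s \<in> {..<n}" and "tree_E ds q x y"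
  from this(2) show "(lift_letter s (x, b) @ lift_letter (sheet_step s (x, b)) (y, c),
      lift_letter s (y, c) @ lift_letter (sheet_step s (y, c)) (x, b)) \<in> raag_rel (tree_V ds r) (tree_E ds r)"
  proof (induct arbitrary: b c rule: tree_E_induct)
    case (sym x y)
    then show ?case by (blast intro: raag_rel_sym)
  next
    case (center_hair h)
    then show ?case using lift_center_commute[of s "Hair h" b c] s by simp
  next
    case (center_pivot i j)
    then show ?case using lift_center_commute[of s "Piv i j" b c] sheet_step_less[of s] s by simp
  next
    case (pivot_leaf i j m)
    then show ?case using lift_pivot_leaf_rel[of i j m s b c] s by simp
  qed
qed

definition base_word :: "nat \<Rightarrow> bool \<Rightarrow> (tvert \<times> bool) list" where
  "base_word k b = replicate k (base_pivot, b)"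

definition embed_gen :: "tvert \<Rightarrow> (tvert \<times> bool) list" where
  "embed_gen x = (case x of
       Ctr \<Rightarrow> [(Ctr, True)]
     | Piv i j \<Rightarrow> replicate n (Piv i j, True)
     | Leaf i j m \<Rightarrow> [(Leaf i j m, True)]
     | Hair k \<Rightarrow> (case hair_label k of
           (Hair h, s) \<Rightarrow> base_word s True @ [(Hair h, True)] @ base_word s False
         | (Q, s) \<Rightarrow> base_word s True @ [(Q, True)] @ base_word (Suc s) False))"

definition embed_letter :: "tvert \<times> bool \<Rightarrow> (tvert \<times> bool) list" where
  "embed_letter a = (if snd a then embed_gen (fst a) else inv_word (embed_gen (fst a)))"

abbreviation "embed_word \<equiv> subst_word embed_letter"

lemma embed_gen_simps [simp]:
  "embed_gen Ctr = [(Ctr, True)]"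
  "embed_gen (Piv i j) = replicate n (Piv i j, True)"
  "embed_gen (Leaf i j m) = [(Leaf i j m, True)]"
  by (simp_all add: embed_gen_def)

lemma embed_gen_hair:
  "h < q \<Longrightarrow> s < n \<Longrightarrow> embed_gen (Hair (enc (Hair h, s))) = base_word s True @ [(Hair h, True)] @ base_word s False"
  by (simp add: embed_gen_def cover_hairs_hairI)

lemma embed_gen_pivot_hair:
  "Piv i j \<in> tree_V ds q \<Longrightarrow> Piv i j \<noteq> base_pivot \<Longrightarrow> Suc s < n \<Longrightarrow>
    embed_gen (Hair (enc (Piv i j, s))) = base_word s True @ [(Piv i j, True)] @ base_word (Suc s) False"
  by (simp add: embed_gen_def cover_hairs_pivotI pivots_def)

lemma base_word_words [simp]: "base_word k b \<in> raag_words (tree_V ds q')"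
  by (simp add: base_word_def)

lemma embed_gen_words: "x \<in> tree_V ds r \<Longrightarrow> embed_gen x \<in> WT"
proof (cases x)
  case (Hair k)
  assume "x \<in> tree_V ds r"
  then have "k < r" using Hair by simp
  then show ?thesis
    by (cases rule: hair_label_cases) (auto simp: embed_gen_def Hair)
qed (auto simp: embed_gen_def)

lemma embed_gen_adjacent_center:
  assumes "x \<in> tree_V ds r" "x \<noteq> Ctr" "\<And>i j m. x \<noteq> Leaf i j m"
  shows "\<forall>z \<in> fst ` set (embed_gen x). tree_E ds q Ctr z"
proof (cases x)
  case (Hair k)
  then have "k < r" using assms(1) by simp
  then show ?thesis
    by (cases rule: hair_label_cases) (auto simp: embed_gen_def Hair base_word_def)
qed (use assms in \<open>auto simp: embed_gen_def\<close>)

lemma embed_center_commute: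
  assumes "z \<in> tree_V ds r" "z \<noteq> Ctr" "\<And>i j m. z \<noteq> Leaf i j m"
  shows "(embed_letter (Ctr, b) @ embed_letter (z, c), embed_letter (z, c) @ embed_letter (Ctr, b))
    \<in> raag_rel (tree_V ds q) (tree_E ds q)"
proof (rule raag_rel_commute)
  have "fst ` set (embed_letter (z, c)) = fst ` set (embed_gen z)"
    by (simp add: embed_letter_def)
  then show "\<forall>x \<in> fst ` set (embed_letter (Ctr, b)). \<forall>y \<in> fst ` set (embed_letter (z, c)). tree_E ds q x y"
    using embed_gen_adjacent_center[OF assms] by (simp add: embed_letter_def)
qed (use embed_gen_words[OF assms(1)] in \<open>simp_all add: embed_letter_def\<close>)

sublocale embed: raag_subst "tree_V ds r" "tree_E ds r" "tree_V ds q" "tree_E ds q" embed_letter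
proof unfold_locales
  fix x b
  assume "x \<in> tree_V ds r"
  then show "embed_letter (x, b) \<in> WT"
    using embed_gen_words by (simp add: embed_letter_def)
next
  fix x b
  show "embed_letter (x, \<not> b) = inv_word (embed_letter (x, b))"
    by (simp add: embed_letter_def)
next
  fix x y b c
  assume "tree_E ds r x y"
  then show "(embed_letter (x, b) @ embed_letter (y, c), embed_letter (y, c) @ embed_letter (x, b))
    \<in> raag_rel (tree_V ds q) (tree_E ds q)"
  proof (induct arbitrary: b c rule: tree_E_induct)
    case (sym x y)
    then show ?case by (blast intro: raag_rel_sym)
  next
    case (center_hair h)
    then show ?case using embed_center_commute[of "Hair h" b c] by simp
  next
    case (center_pivot i j)
    then show ?case using embed_center_commute[of "Piv i j" b c] by simp
  next
    case (pivot_leaf i j m)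
    then show ?case
      by (intro raag_rel_commute) (auto simp: embed_letter_def)
  qed
qed

subsection \<open>Rewriting inverts the embedding\<close>

lemma lift_base_word_pos:
  "t + k \<le> top_sheet \<Longrightarrow> lift_word t (base_word k True) = [] \<and> foldl sheet_step t (base_word k True) = t + k"
proof (induct k arbitrary: t)
  case (Suc k)
  then have "t < top_sheet" "t < n"
    using top_sheet_less by linarith+
  then have "sheet_succ t = Suc t" "lift_pivot base_pivot t = []"
    by (simp_all add: sheet_succ_eq lift_pivot_def)
  then show ?case
    using Suc.hyps[of "Suc t"] Suc.prems by (simp add: base_word_def base_pivot_def)
qed (simp add: base_word_def)

lemma lift_base_word_neg:
  "k \<le> t \<Longrightarrow> t < n \<Longrightarrow> lift_word t (base_word k False) = [] \<and> foldl sheet_step t (base_word k False) = t - k"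
proof (induct k arbitrary: t)
  case (Suc k)
  then have "t \<noteq> 0" "t - 1 < top_sheet"
    by (auto simp: top_sheet_def)
  then have "sheet_pred t = t - 1" "lift_pivot base_pivot (t - 1) = []"
    using Suc.prems by (simp_all add: sheet_pred_eq lift_pivot_def)
  then show ?case
    using Suc.hyps[of "t - 1"] Suc.prems by (simp add: base_word_def base_pivot_def)
qed (simp add: base_word_def)

lemma lift_replicate_pivot:
  "k \<le> top_sheet \<Longrightarrow> lift_word 0 (replicate k (Piv i j, True)) = lift_pivot_pow (Piv i j) k \<and>
    foldl sheet_step 0 (replicate k (Piv i j, True)) = k"
proof (induct k)
  case (Suc k)
  then have "k < top_sheet" "k < n"
    using top_sheet_less by linarith+
  then have "sheet_succ k = Suc k"
    by (simp add: sheet_succ_eq)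
  moreover have "replicate (Suc k) (Piv i j, True) = replicate k (Piv i j, True) @ [(Piv i j, True)]"
    by (simp add: replicate_append_same)
  ultimately show ?case
    using Suc \<open>k < top_sheet\<close> by (simp only: transduce_append foldl_append) (simp add: lift_pivot_pow_Suc)
qed simp

lemma lift_embed_pivot:
  assumes "Piv i j \<in> tree_V ds r"
  shows "clR (lift_word 0 (embed_gen (Piv i j))) = clR [(Piv i j, True)] \<and>
    foldl sheet_step 0 (embed_gen (Piv i j)) = 0"
proof -
  let ?Y = "lift_pivot_pow (Piv i j) top_sheet"
  have Y: "?Y \<in> WR"
    using assms by (intro lift_pivot_pow_words) (simp_all add: pivots_def)
  have rep: "embed_gen (Piv i j) = replicate top_sheet (Piv i j, True) @ [(Piv i j, True)]"
    by (metis embed_gen_simps(2) n_eq replicate_Suc replicate_append_same)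
  have "lift_word 0 (embed_gen (Piv i j)) = ?Y @ inv_word ?Y @ [(Piv i j, True)]"
    using lift_replicate_pivot[of top_sheet i j] by (simp only: rep transduce_append) (simp add: lift_pivot_top)
  moreover have "(?Y @ inv_word ?Y @ [(Piv i j, True)], [(Piv i j, True)]) \<in> raag_rel (tree_V ds r) (tree_E ds r)"
    using raag_rel_context[OF raag_rel_inverse_right[OF Y], of "[]" "[(Piv i j, True)]"] assms by simp
  ultimately have "clR (lift_word 0 (embed_gen (Piv i j))) = clR [(Piv i j, True)]"
    by (simp only: raag_class_eq_iff)
  moreover have "foldl sheet_step 0 (embed_gen (Piv i j)) = 0"
    using lift_replicate_pivot[of top_sheet i j] by (simp only: rep foldl_append) (simp add: sheet_succ_eq)
  ultimately show ?thesis
    by (rule conjI)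
qed

lemma lift_embed_hair:
  assumes "k < r"
  shows "lift_word 0 (embed_gen (Hair k)) = [(Hair k, True)] \<and> foldl sheet_step 0 (embed_gen (Hair k)) = 0"
  using assms
proof (cases rule: hair_label_cases)
  case (hair h s)
  then have "enc (Hair h, s) = k"
    using enc_hair_label[OF assms] by simp
  moreover have "embed_gen (Hair k) = base_word s True @ [(Hair h, True)] @ base_word s False"
    using hair by (simp add: embed_gen_def)
  ultimately show ?thesis
    using lift_base_word_pos[of 0 s] lift_base_word_neg[of s s] hair by (simp add: top_sheet_def)
next
  case (pivot i j s)
  then have "enc (Piv i j, s) = k"
    using enc_hair_label[OF assms] by simp
  then have "lift_pivot (Piv i j) s = [(Hair k, True)]"
    using pivot by (simp add: lift_pivot_def top_sheet_def)
  moreover have "embed_gen (Hair k) = base_word s True @ [(Piv i j, True)] @ base_word (Suc s) False"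
    using pivot by (simp add: embed_gen_def)
  moreover have "sheet_succ s = Suc s"
    using pivot by (simp add: sheet_succ_eq top_sheet_def)
  ultimately show ?thesis
    using lift_base_word_pos[of 0 s] lift_base_word_neg[of "Suc s" "Suc s"] pivot
    by (simp add: top_sheet_def)
qed

lemma lift_embed_gen:
  "x \<in> tree_V ds r \<Longrightarrow> clR (lift_word 0 (embed_gen x)) = clR [(x, True)] \<and> foldl sheet_step 0 (embed_gen x) = 0"
proof (cases x)
  case (Piv i j)
  assume "x \<in> tree_V ds r"
  then show ?thesis
    using lift_embed_pivot[of i j] Piv by simp
qed (simp_all add: lift_embed_hair)

lemma lift_embed_letter:
  assumes x: "x \<in> tree_V ds r"
  shows "clR (lift_word 0 (embed_letter (x, b))) = clR [(x, b)] \<and> foldl sheet_step 0 (embed_letter (x, b)) = 0"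
proof (cases b)
  case False
  have g: "embed_gen x \<in> WT"
    using embed_gen_words[OF x] .
  have "lift_word 0 (inv_word (embed_gen x)) = inv_word (lift_word 0 (embed_gen x))"
    "foldl sheet_step 0 (inv_word (embed_gen x)) = 0"
    using lift.transduce_inv_word[OF _ _ g, of 0] lift_embed_gen[OF x] lift_letter_inverse n_pos by auto
  moreover have "lift_word 0 (embed_gen x) \<in> WR"
    using lift.transduce_words[OF _ g] n_pos by simp
  ultimately show ?thesis
    using False lift_embed_gen[OF x] x by (simp add: embed_letter_def R.class_inv_word R.class_neg_letter)
qed (use lift_embed_gen[OF x] in \<open>simp add: embed_letter_def\<close>)

lemma lift_embed_word:
  "w \<in> WR \<Longrightarrow> clR (lift_word 0 (embed_word w)) = clR w \<and> foldl sheet_step 0 (embed_word w) = 0"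
proof (induct w)
  case (Cons a w)
  obtain x b where a: "a = (x, b)" by (cases a)
  with Cons have x: "x \<in> tree_V ds r" and w: "w \<in> WR" by auto
  have "lift_word 0 (embed_letter (x, b)) \<in> WR" "lift_word 0 (embed_word w) \<in> WR"
    using lift.transduce_words embed.subst_words[OF x] embed.subst_word_words[OF w] n_pos by simp_all
  moreover have "clR ((x, b) # w) = clR [(x, b)] \<otimes>\<^bsub>GR\<^esub> clR w"
    using R.class_append[of "[(x, b)]" w] x w by simp
  ultimately show ?case
    using a lift_embed_letter[OF x, of b] Cons(1)[OF w] by (simp add: R.class_append)
qed (simp add: R.class_Nil)

subsection \<open>The embedding undoes rewriting up to conjugation by the transversal\<close>

abbreviation "p0 \<equiv> clT [(base_pivot, True)]"

lemma class_base_word_pos: "clT (base_word k True) = p0 [^]\<^bsub>GT\<^esub> k"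
  unfolding base_word_def by (rule T.class_replicate) simp

lemma class_base_word_neg: "clT (base_word k False) = inv\<^bsub>GT\<^esub> (p0 [^]\<^bsub>GT\<^esub> k)"
  unfolding base_word_def by (rule T.class_replicate_neg) simp

lemma class_Cons_base_word:
  "x \<in> tree_V ds q \<Longrightarrow> clT ((x, c) # base_word k b) = clT [(x, c)] \<otimes>\<^bsub>GT\<^esub> clT (base_word k b)"
  using T.class_append[of "[(x, c)]" "base_word k b"] by simp

lemma embed_lift_pivot:
  assumes Q: "Q \<in> pivots ds" and s: "s < top_sheet"
  shows "clT (embed_word (lift_pivot Q s)) = p0 [^]\<^bsub>GT\<^esub> s \<otimes>\<^bsub>GT\<^esub> clT [(Q, True)] \<otimes>\<^bsub>GT\<^esub> inv\<^bsub>GT\<^esub> (p0 [^]\<^bsub>GT\<^esub> Suc s)"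
proof (cases "Q = base_pivot")
  case True
  then show ?thesis
    using s by (simp add: lift_pivot_def T.class_Nil T.grp.m_assoc T.grp.inv_mult_group)
next
  case False
  obtain i j where ij: "Q = Piv i j" "Piv i j \<in> tree_V ds q"
    using Q by (auto simp: pivots_def)
  have "lift_pivot Q s = [(Hair (enc (Q, s)), True)]"
    using False s by (simp add: lift_pivot_def)
  moreover have "embed_gen (Hair (enc (Q, s))) = base_word s True @ [(Q, True)] @ base_word (Suc s) False"
    using embed_gen_pivot_hair[of i j s] ij False s by (simp add: top_sheet_def)
  ultimately show ?thesis
    using ij by (simp add: embed_letter_def T.class_append class_Cons_base_word T.class_Nil
        class_base_word_pos class_base_word_neg T.grp.m_assoc del: T.grp.nat_pow_Suc)
qed

lemma embed_lift_pivot_pow: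
  "Q \<in> pivots ds \<Longrightarrow> s \<le> top_sheet \<Longrightarrow>
    clT (embed_word (lift_pivot_pow Q s)) = clT [(Q, True)] [^]\<^bsub>GT\<^esub> s \<otimes>\<^bsub>GT\<^esub> inv\<^bsub>GT\<^esub> (p0 [^]\<^bsub>GT\<^esub> s)"
proof (induct s)
  case (Suc s)
  then have s: "s < top_sheet"
    by simp
  have "Q \<in> tree_V ds q"
    using Suc.prems by (auto simp: pivots_def)
  moreover have "embed_word (lift_pivot_pow Q s) \<in> WT" "embed_word (lift_pivot Q s) \<in> WT"
    using embed.subst_word_words lift_pivot_pow_words lift_pivot_words Suc.prems s by simp_all
  ultimately show ?case
    using Suc.hyps Suc.prems s embed_lift_pivot[of Q s]
    by (simp add: lift_pivot_pow_Suc T.class_append T.grp.m_assoc T.grp.inv_mult_group)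
qed (simp add: T.class_Nil)

text \<open>The lift of a leaf is conjugated by the lift A of Q^s p^-s, and Q commutes with the leaf.\<close>

lemma embed_lift_leaf:
  assumes s: "s < n" and l: "Leaf i j m \<in> tree_V ds q"
  shows "clT (embed_word (lift_letter s (Leaf i j m, True))) =
    p0 [^]\<^bsub>GT\<^esub> s \<otimes>\<^bsub>GT\<^esub> clT [(Leaf i j m, True)] \<otimes>\<^bsub>GT\<^esub> inv\<^bsub>GT\<^esub> (p0 [^]\<^bsub>GT\<^esub> s)"
proof -
  let ?Q = "Piv i j"
  let ?A = "clT (embed_word (lift_pivot_pow ?Q s))"
  let ?l = "clT [(Leaf i j m, True)]"
  let ?q = "clT [(?Q, True)]"
  have Q: "?Q \<in> pivots ds" "?Q \<in> tree_V ds q"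
    using l by (auto simp: pivots_def)
  have sl: "s \<le> top_sheet"
    using s by (simp add: top_sheet_def)
  have Y: "embed_word (lift_pivot_pow ?Q s) \<in> WT"
    using embed.subst_word_words lift_pivot_pow_words Q sl by simp
  have carrier: "?q \<in> carrier GT" "?l \<in> carrier GT"
    using Q l by simp_all
  have "clT [(Leaf i j m, True)] \<otimes>\<^bsub>GT\<^esub> clT (replicate s (?Q, True)) =
      clT (replicate s (?Q, True)) \<otimes>\<^bsub>GT\<^esub> clT [(Leaf i j m, True)]"
    by (rule T.class_commute) (use l in auto)
  then have comm: "?l \<otimes>\<^bsub>GT\<^esub> ?q [^]\<^bsub>GT\<^esub> s = ?q [^]\<^bsub>GT\<^esub> s \<otimes>\<^bsub>GT\<^esub> ?l"
    using Q by (simp add: T.class_replicate)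
  have "clT ((Leaf i j m, True) # embed_word (lift_pivot_pow ?Q s)) = ?l \<otimes>\<^bsub>GT\<^esub> ?A"
    using T.class_append[of "[(Leaf i j m, True)]" "embed_word (lift_pivot_pow ?Q s)"] Y l by simp
  then have "clT (embed_word (lift_letter s (Leaf i j m, True))) = inv\<^bsub>GT\<^esub> ?A \<otimes>\<^bsub>GT\<^esub> (?l \<otimes>\<^bsub>GT\<^esub> ?A)"
    using Y l by (simp add: embed.subst_word_inv_word embed_letter_def T.class_append T.class_inv_word)
  also have "\<dots> = p0 [^]\<^bsub>GT\<^esub> s \<otimes>\<^bsub>GT\<^esub> (inv\<^bsub>GT\<^esub> (?q [^]\<^bsub>GT\<^esub> s) \<otimes>\<^bsub>GT\<^esub>
      ((?l \<otimes>\<^bsub>GT\<^esub> ?q [^]\<^bsub>GT\<^esub> s) \<otimes>\<^bsub>GT\<^esub> inv\<^bsub>GT\<^esub> (p0 [^]\<^bsub>GT\<^esub> s)))"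
    using carrier by (simp add: embed_lift_pivot_pow[OF Q(1) sl] T.grp.inv_mult_group T.grp.m_assoc
        del: T.grp.nat_pow_Suc)
  also have "\<dots> = p0 [^]\<^bsub>GT\<^esub> s \<otimes>\<^bsub>GT\<^esub> ?l \<otimes>\<^bsub>GT\<^esub> inv\<^bsub>GT\<^esub> (p0 [^]\<^bsub>GT\<^esub> s)"
    using carrier by (simp add: comm T.grp.m_assoc del: T.grp.nat_pow_Suc)
  finally show ?thesis .
qed

lemma embed_lift_pivot_letter:
  assumes s: "s < n" and Q: "Piv i j \<in> tree_V ds q"
  shows "clT (embed_word (lift_letter s (Piv i j, True))) =
    p0 [^]\<^bsub>GT\<^esub> s \<otimes>\<^bsub>GT\<^esub> clT [(Piv i j, True)] \<otimes>\<^bsub>GT\<^esub> inv\<^bsub>GT\<^esub> (p0 [^]\<^bsub>GT\<^esub> sheet_succ s)"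
proof (cases "s < top_sheet")
  case True
  then show ?thesis
    using embed_lift_pivot[OF _ True, of "Piv i j"] Q by (simp add: sheet_succ_eq s pivots_def)
next
  case False
  let ?Q = "Piv i j"
  have s_top: "s = top_sheet"
    using False s by (simp add: top_sheet_def)
  have Y: "embed_word (lift_pivot_pow ?Q top_sheet) \<in> WT"
    using embed.subst_word_words lift_pivot_pow_words Q by (simp add: pivots_def)
  have "clT (replicate n (?Q, True)) = clT [(?Q, True)] [^]\<^bsub>GT\<^esub> Suc top_sheet"
    using T.class_replicate[of ?Q n] Q n_eq by simp
  then have rep: "clT (replicate n (?Q, True)) =
      clT [(?Q, True)] [^]\<^bsub>GT\<^esub> top_sheet \<otimes>\<^bsub>GT\<^esub> clT [(?Q, True)]"
    by simp
  have "sheet_succ top_sheet = 0"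
    by (simp add: sheet_succ_eq)
  then show ?thesis
    using s_top Y embed_lift_pivot_pow[of ?Q top_sheet] Q
    by (simp add: lift_pivot_top embed_letter_def embed.subst_word_inv_word T.class_append T.class_inv_word
        rep T.grp.m_assoc T.grp.inv_mult_group pivots_def del: T.grp.nat_pow_Suc)
qed

lemma embed_lift_letter_pos:
  assumes s: "s < n" and x: "x \<in> tree_V ds q"
  shows "clT (embed_word (lift_letter s (x, True))) =
    p0 [^]\<^bsub>GT\<^esub> s \<otimes>\<^bsub>GT\<^esub> clT [(x, True)] \<otimes>\<^bsub>GT\<^esub> inv\<^bsub>GT\<^esub> (p0 [^]\<^bsub>GT\<^esub> sheet_step s (x, True))"
proof (cases x)
  case Ctr
  have "clT (base_word s True) \<otimes>\<^bsub>GT\<^esub> clT [(Ctr, True)] = clT [(Ctr, True)] \<otimes>\<^bsub>GT\<^esub> clT (base_word s True)"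
    by (rule T.class_commute) (auto simp: base_word_def)
  then show ?thesis
    using Ctr by (simp add: embed_letter_def class_base_word_pos T.grp.m_assoc del: T.grp.nat_pow_Suc)
next
  case (Hair h)
  then show ?thesis
    using x s by (simp add: embed_gen_hair embed_letter_def T.class_append class_Cons_base_word
        class_base_word_pos class_base_word_neg T.grp.m_assoc del: T.grp.nat_pow_Suc)
qed (use embed_lift_leaf embed_lift_pivot_letter s x in simp_all)

lemma embed_lift_letter:
  assumes s: "s < n" and x: "x \<in> tree_V ds q"
  shows "clT (embed_word (lift_letter s (x, b))) =
    p0 [^]\<^bsub>GT\<^esub> s \<otimes>\<^bsub>GT\<^esub> clT [(x, b)] \<otimes>\<^bsub>GT\<^esub> inv\<^bsub>GT\<^esub> (p0 [^]\<^bsub>GT\<^esub> sheet_step s (x, b))"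
proof (cases b)
  case False
  let ?s = "sheet_step s (x, False)"
  have s': "?s < n"
    using sheet_step_less[OF s] .
  have "lift_letter s (x, False) = inv_word (lift_letter ?s (x, True))"
    using lift_letter_inverse[OF s, of x False] by simp
  moreover have "sheet_step ?s (x, True) = s"
    using sheet_step_inverse[OF s, of x False] by simp
  moreover have "embed_word (lift_letter ?s (x, True)) \<in> WT"
    using embed.subst_word_words lift_letter_words[OF s' x] by simp
  ultimately show ?thesis
    using False embed_lift_letter_pos[OF s' x] x
    by (simp add: embed.subst_word_inv_word T.class_inv_word T.class_neg_letter T.grp.inv_mult_group
        T.grp.m_assoc del: T.grp.nat_pow_Suc)
qed (use embed_lift_letter_pos[OF s x] in simp)

lemma embed_lift_word:
  "s < n \<Longrightarrow> w \<in> WT \<Longrightarrow> clT (embed_word (lift_word s w)) =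
    p0 [^]\<^bsub>GT\<^esub> s \<otimes>\<^bsub>GT\<^esub> clT w \<otimes>\<^bsub>GT\<^esub> inv\<^bsub>GT\<^esub> (p0 [^]\<^bsub>GT\<^esub> foldl sheet_step s w)"
proof (induct w arbitrary: s)
  case (Cons a w)
  obtain x b where a: "a = (x, b)" by (cases a)
  with Cons have x: "x \<in> tree_V ds q" and w: "w \<in> WT" by auto
  have s1: "sheet_step s (x, b) < n"
    using sheet_step_less Cons.prems by simp
  have "embed_word (lift_letter s (x, b)) \<in> WT" "embed_word (lift_word (sheet_step s (x, b)) w) \<in> WT"
    using embed.subst_word_words lift_letter_words lift.transduce_words s1 w Cons.prems x by simp_all
  moreover have "clT ((x, b) # w) = clT [(x, b)] \<otimes>\<^bsub>GT\<^esub> clT w"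
    using T.class_append[of "[(x, b)]" w] x w by simp
  ultimately show ?case
    using a Cons(1)[OF s1 w] embed_lift_letter[OF Cons.prems(1) x, of b] x w
    by (simp add: T.class_append T.grp.m_assoc del: T.grp.nat_pow_Suc)
qed (simp add: T.class_Nil T.grp.m_assoc del: T.grp.nat_pow_Suc)

abbreviation "embed_hom \<equiv> subst_hom (tree_V ds q) (tree_E ds q) embed_letter"

lemma embed_class: "w \<in> WR \<Longrightarrow> embed_hom (clR w) = clT (embed_word w)"
  by (rule embed.subst_hom_class)

lemma inj_on_embed: "inj_on embed_hom (carrier GR)"
proof (rule inj_onI)
  fix x y
  assume "x \<in> carrier GR" "y \<in> carrier GR" and eq: "embed_hom x = embed_hom y"
  then obtain u v where u: "u \<in> WR" "x = clR u" and v: "v \<in> WR" "y = clR v"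
    by (auto simp: carrier_raag)
  then have "(embed_word u, embed_word v) \<in> raag_rel (tree_V ds q) (tree_E ds q)"
    using eq by (simp add: embed_class raag_class_eq_iff[symmetric])
  then have "(lift_word 0 (embed_word u), lift_word 0 (embed_word v)) \<in> raag_rel (tree_V ds r) (tree_E ds r)"
    using lift.transduce_rel embed.subst_word_words[OF u(1)] n_pos by simp
  then show "x = y"
    using lift_embed_word u v by (simp add: raag_class_eq_iff[symmetric])
qed

text \<open>Every g is k p^s with k in the image: rewrite g p^-s for the final sheet s of g.\<close>

lemma rcosets_embed_image:
  "rcosets\<^bsub>GT\<^esub> (embed_hom ` carrier GR) \<subseteq> (\<lambda>s. embed_hom ` carrier GR #>\<^bsub>GT\<^esub> (p0 [^]\<^bsub>GT\<^esub> s)) ` {..<n}"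
proof
  fix C
  assume "C \<in> rcosets\<^bsub>GT\<^esub> (embed_hom ` carrier GR)"
  then obtain g where g: "g \<in> carrier GT" "C = embed_hom ` carrier GR #>\<^bsub>GT\<^esub> g"
    by (auto simp: RCOSETS_def)
  obtain w where w: "w \<in> WT" "g = clT w"
    using g by (auto simp: carrier_raag)
  define s where "s = foldl sheet_step 0 w"
  have s: "s < n"
    using lift.foldl_next_closed[of 0 w] w n_pos by (simp add: s_def)
  let ?w = "w @ base_word s False"
  have "foldl sheet_step 0 ?w = 0"
    using lift_base_word_neg[of s s] s by (simp add: s_def base_word_def)
  then have "clT (embed_word (lift_word 0 ?w)) = clT ?w"
    using embed_lift_word[of 0 ?w] w n_pos by simp
  moreover have "lift_word 0 ?w \<in> WR"
    using lift.transduce_words[of 0 ?w] w n_pos by simp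
  ultimately have "clT ?w \<in> embed_hom ` carrier GR"
    by (metis embed_class raag_class_carrier image_eqI)
  moreover have "g = clT ?w \<otimes>\<^bsub>GT\<^esub> p0 [^]\<^bsub>GT\<^esub> s"
    using w by (simp add: T.class_append class_base_word_neg T.grp.m_assoc)
  ultimately have "g \<in> embed_hom ` carrier GR #>\<^bsub>GT\<^esub> (p0 [^]\<^bsub>GT\<^esub> s)"
    using T.grp.rcosI[of "clT ?w" "embed_hom ` carrier GR" "p0 [^]\<^bsub>GT\<^esub> s"]
      subgroup.subset[OF embed.subst_hom_image_subgroup] by auto
  then have "embed_hom ` carrier GR #>\<^bsub>GT\<^esub> (p0 [^]\<^bsub>GT\<^esub> s) = C"
    using T.grp.repr_independence[OF _ _ embed.subst_hom_image_subgroup] g by simp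
  then show "C \<in> (\<lambda>s. embed_hom ` carrier GR #>\<^bsub>GT\<^esub> (p0 [^]\<^bsub>GT\<^esub> s)) ` {..<n}"
    using s by auto
qed

lemma iso_to_finite_index_subgroup_cover:
  "iso_to_finite_index_subgroup (tree_raag ds r) (tree_raag ds q)"
  unfolding tree_raag_def
proof (rule iso_to_finite_index_subgroupI)
  show "finite (rcosets\<^bsub>GT\<^esub> (embed_hom ` carrier GR))"
    using rcosets_embed_image by (rule finite_subset) simp
qed (simp_all add: group_raag embed.subst_hom_hom inj_on_embed)

end

lemma iso_to_finite_index_subgroup_tree_raag_cover:
  assumes "valid_params ds" "0 < n"
  shows "iso_to_finite_index_subgroup (tree_raag ds (card (cover_hairs ds q n))) (tree_raag ds q)"
proof -
  obtain enc where "bij_betw enc (cover_hairs ds q n) {0..<card (cover_hairs ds q n)}"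
    using ex_bij_betw_finite_nat[OF finite_cover_hairs] by blast
  then have "bij_betw enc (cover_hairs ds q n) {..<card (cover_hairs ds q n)}"
    by (simp add: atLeast0LessThan)
  then interpret cyclic_cover ds q n enc
    using assms by unfold_locales
  show ?thesis
    by (rule iso_to_finite_index_subgroup_cover)
qed

lemma card_cover_hairs_swap:
  assumes "valid_params ds"
  defines "M \<equiv> card (pivots ds) - 1"
  shows "card (cover_hairs ds q (M + p)) = card (cover_hairs ds p (M + q))"
proof -
  have "1 \<le> M"
    using card_pivots_ge_2[OF assms(1)] by (simp add: M_def)
  then obtain m where "M = Suc m"
    by (cases M) auto
  then show ?thesis
    using assms by (simp add: card_cover_hairs M_def algebra_simps)
qed

theorem mainTheorem7:
  fixes ds :: "(nat \<times> nat) list" and p q :: nat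
  assumes "valid_params ds"
  shows "\<exists>r::nat. iso_to_finite_index_subgroup (tree_raag ds r) (tree_raag ds q)
                \<and> iso_to_finite_index_subgroup (tree_raag ds r) (tree_raag ds p)
          \<and> commensurable (tree_raag ds q) (tree_raag ds p)"
proof -
  define M where "M = card (pivots ds) - 1"
  have M: "1 \<le> M"
    using card_pivots_ge_2[OF assms] by (simp add: M_def)
  let ?r = "card (cover_hairs ds q (M + p))"
  have q: "iso_to_finite_index_subgroup (tree_raag ds ?r) (tree_raag ds q)"
    using iso_to_finite_index_subgroup_tree_raag_cover[OF assms, of "M + p" q] M by simp
  have p: "iso_to_finite_index_subgroup (tree_raag ds ?r) (tree_raag ds p)"
    using iso_to_finite_index_subgroup_tree_raag_cover[OF assms, of "M + q" p] M
      card_cover_hairs_swap[OF assms, of q p, folded M_def] by simp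
  have "commensurable (tree_raag ds q) (tree_raag ds p)"
    using commensurable_if_common_subgroup[OF _ q p] by (simp add: tree_raag_def group_raag)
  with q p show ?thesis
    by blast
qed

end
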